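(* Let $\mathfrak{T}$ be a topological space and let $\mathfrak{H}$ be the complete Heyting algebra of open sets of $\mathfrak{T}$, with point-free coderivative $\divideontimes \mathsf{h} := \bigwedge_{\mathsf{i}\in\mathfrak{H}}(\mathsf{i}\vee(\mathsf{i}\to\mathsf{h}))$. (1) If $\mathfrak{T}$ is scattered, then $\divideontimes$ is a $\mathsf{KM}$-operator on $\mathfrak{H}$. (2) If $\mathfrak{T}$ is $T_0$ and $\divideontimes$ is a $\mathsf{KM}$-operator on $\mathfrak{H}$, then $\mathfrak{T}$ is scattered.
   Context: A topological space is scattered if every nonempty subset has an isolated point (relative to the subspace). A unary operation $\Box$ on a Heyting algebra is a $\mathsf{KM}$-operator if for all $a,b$: $\Box\top=\top$, $\Box(a\wedge b)=\Box a\wedge\Box b$, $a\le\Box a$, $\Box a\le b\vee(b\to a)$, and $(\Box a\to a)\le a$. *)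

theory Defs
  imports "HOL-Analysis.Analysis"
begin

text \<open>The complete Heyting algebra of open sets of a topological space X:
  meet = intersection, join = union, top = topspace X,
  arbitrary meet = interior of the intersection,
  Heyting implication a \<rightarrow> b = interior of (complement of a union b).\<close>

definition opens_imp :: "'a topology \<Rightarrow> 'a set \<Rightarrow> 'a set \<Rightarrow> 'a set" where
  "opens_imp X a b = X interior_of ((topspace X - a) \<union> b)"

definition opens_Inf :: "'a topology \<Rightarrow> 'a set set \<Rightarrow> 'a set" where
  "opens_Inf X F = X interior_of (topspace X \<inter> \<Inter>F)"

definition coderiv :: "'a topology \<Rightarrow> 'a set \<Rightarrow> 'a set" where
  "coderiv X h = opens_Inf X {i \<union> opens_imp X i h | i. openin X i}"

definition KM_operator :: "'a topology \<Rightarrow> ('a set \<Rightarrow> 'a set) \<Rightarrow> bool" where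
  "KM_operator X B \<longleftrightarrow>
     (\<forall>a. openin X a \<longrightarrow> openin X (B a)) \<and>
     B (topspace X) = topspace X \<and>
     (\<forall>a b. openin X a \<longrightarrow> openin X b \<longrightarrow>
        B (a \<inter> b) = B a \<inter> B b \<and>
        a \<subseteq> B a \<and>
        B a \<subseteq> b \<union> opens_imp X b a \<and>
        opens_imp X (B a) a \<subseteq> a)"

definition scattered_space :: "'a topology \<Rightarrow> bool" where
  "scattered_space X \<longleftrightarrow>
     (\<forall>S. S \<subseteq> topspace X \<longrightarrow> S \<noteq> {} \<longrightarrow>
        (\<exists>x\<in>S. \<exists>U. openin X U \<and> U \<inter> S = {x}))"

end

theory Submission
  imports Defs
begin

text \<open>A point y lies in every i \<union> (i \<rightarrow> a) exactly when X closure_of {y} \<union> a is a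
  neighbourhood of y, so coderiv X a is the interior of the set of such points. From this
  description all KM axioms except the Loeb axiom (coderiv X a \<rightarrow> a) \<subseteq> a hold in every
  space. In a scattered space an isolated point x of (coderiv X a \<rightarrow> a) - a has a neighbourhood
  inside {x} \<union> a, so it lies in coderiv X a, which is impossible. Conversely, if S has no isolated
  point, let a be the complement of the closure of S: a point y \<in> S \<inter> coderiv X a yields a second
  point z \<in> S near y in the closure of {y}, and then also y lies in the closure of {z}, which T0
  forbids. So the closure of S misses coderiv X a, and the Loeb axiom for a forces S = {}.\<close>

lemma coderiv_eq_interior_of:
  "coderiv X a = X interior_of {y \<in> topspace X. \<forall>i. openin X i \<longrightarrow> y \<in> i \<union> opens_imp X i a}"
  unfolding coderiv_def opens_Inf_def by (rule arg_cong[where f = "(interior_of) X"]) blast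

text \<open>The opens missing y are those inside the complement of X closure_of {y}, and
  opens_imp X i a is antitone in i, so that complement is the decisive i.\<close>
lemma all_opens_imp_iff_interior_of_closure_of_sing:
  assumes "y \<in> topspace X"
  shows "(\<forall>i. openin X i \<longrightarrow> y \<in> i \<union> opens_imp X i a) \<longleftrightarrow>
         y \<in> X interior_of (X closure_of {y} \<union> a)"
proof
  assume all: "\<forall>i. openin X i \<longrightarrow> y \<in> i \<union> opens_imp X i a"
  have "y \<notin> topspace X - X closure_of {y}"
    using assms closure_of_subset[of "{y}" X] by blast
  moreover have "openin X (topspace X - X closure_of {y})"
    by (simp add: openin_diff)
  ultimately have "y \<in> opens_imp X (topspace X - X closure_of {y}) a"
    using all by blast
  then show "y \<in> X interior_of (X closure_of {y} \<union> a)"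
    by (simp add: opens_imp_def closure_of_subset_topspace double_diff)
next
  assume y: "y \<in> X interior_of (X closure_of {y} \<union> a)"
  show "\<forall>i. openin X i \<longrightarrow> y \<in> i \<union> opens_imp X i a"
  proof (intro allI impI)
    fix i assume i: "openin X i"
    show "y \<in> i \<union> opens_imp X i a"
    proof (cases "y \<in> i")
      case False
      then have "i \<inter> X closure_of {y} = {}"
        by (simp add: i openin_Int_closure_of_eq_empty)
      then have "X closure_of {y} \<union> a \<subseteq> (topspace X - i) \<union> a"
        using closure_of_subset_topspace[of X "{y}"] by blast
      then have "X interior_of (X closure_of {y} \<union> a) \<subseteq> opens_imp X i a"
        unfolding opens_imp_def by (rule interior_of_mono)
      then show ?thesis
        using y by blast
    qed simp
  qed
qed

lemma coderiv_eq_interior_of_closure_of_sing: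
  "coderiv X a = X interior_of {y \<in> topspace X. y \<in> X interior_of (X closure_of {y} \<union> a)}"
  unfolding coderiv_eq_interior_of
  by (intro arg_cong[where f = "(interior_of) X"] Collect_cong conj_cong refl
      all_opens_imp_iff_interior_of_closure_of_sing)

lemma in_coderiv:
  "x \<in> coderiv X a \<longleftrightarrow>
   (\<exists>V. openin X V \<and> x \<in> V \<and> (\<forall>y\<in>V. y \<in> X interior_of (X closure_of {y} \<union> a)))"
proof -
  have "V \<subseteq> {y \<in> topspace X. y \<in> X interior_of (X closure_of {y} \<union> a)} \<longleftrightarrow>
        (\<forall>y\<in>V. y \<in> X interior_of (X closure_of {y} \<union> a))" if "openin X V" for V
    using openin_subset[OF that] by auto
  then show ?thesis
    unfolding coderiv_eq_interior_of_closure_of_sing interior_of_def by auto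
qed

lemma openin_coderiv: "openin X (coderiv X a)"
  by (simp add: coderiv_def opens_Inf_def)

lemma coderiv_Int: "coderiv X (a \<inter> b) = coderiv X a \<inter> coderiv X b"
proof -
  have "X closure_of {y} \<union> (a \<inter> b) = (X closure_of {y} \<union> a) \<inter> (X closure_of {y} \<union> b)" for y
    by blast
  then have "{y \<in> topspace X. y \<in> X interior_of (X closure_of {y} \<union> (a \<inter> b))} =
      {y \<in> topspace X. y \<in> X interior_of (X closure_of {y} \<union> a)} \<inter>
      {y \<in> topspace X. y \<in> X interior_of (X closure_of {y} \<union> b)}"
    by (auto simp: interior_of_Int)
  then show ?thesis
    by (simp add: coderiv_eq_interior_of_closure_of_sing interior_of_Int)
qed

lemma subset_coderiv: "openin X a \<Longrightarrow> a \<subseteq> coderiv X a"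
  unfolding in_coderiv subset_iff by (meson Un_upper2 interior_of_maximal subsetD)

lemma coderiv_topspace: "coderiv X (topspace X) = topspace X"
  by (meson subset_antisym openin_subset openin_coderiv subset_coderiv openin_topspace)

lemma coderiv_subset_opens_imp:
  assumes "openin X b"
  shows "coderiv X a \<subseteq> b \<union> opens_imp X b a"
proof -
  have "coderiv X a \<subseteq> {y \<in> topspace X. \<forall>i. openin X i \<longrightarrow> y \<in> i \<union> opens_imp X i a}"
    unfolding coderiv_eq_interior_of by (rule interior_of_subset)
  with assms show ?thesis by auto
qed

lemma KM_operator_coderiv_iff:
  "KM_operator X (coderiv X) \<longleftrightarrow> (\<forall>a. openin X a \<longrightarrow> opens_imp X (coderiv X a) a \<subseteq> a)"
  unfolding KM_operator_def
  by (simp add: openin_coderiv coderiv_topspace coderiv_Int subset_coderiv coderiv_subset_opens_imp)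
     (meson openin_empty)

lemma scattered_space_opens_imp_coderiv_subset:
  assumes scattered: "scattered_space X" and a: "openin X a"
  shows "opens_imp X (coderiv X a) a \<subseteq> a"
proof (rule ccontr)
  define W where "W = opens_imp X (coderiv X a) a"
  assume "\<not> opens_imp X (coderiv X a) a \<subseteq> a"
  then have "W - a \<noteq> {}" by (auto simp: W_def)
  moreover have W: "openin X W" by (simp add: W_def opens_imp_def)
  then have "W - a \<subseteq> topspace X" using openin_subset by blast
  ultimately obtain x U where x: "x \<in> W - a" and U: "openin X U" "U \<inter> (W - a) = {x}"
    using scattered[unfolded scattered_space_def, rule_format, of "W - a"] by blast
  have "x \<in> coderiv X a"
    unfolding in_coderiv
  proof (intro exI conjI ballI)
    show "openin X (U \<inter> W)" using U W by blast
    show "x \<in> U \<inter> W" using U x by blast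
    fix y assume y: "y \<in> U \<inter> W"
    consider "y = x" | "y \<in> a" using U y by blast
    then show "y \<in> X interior_of (X closure_of {y} \<union> a)"
    proof cases
      case 1
      have "U \<inter> W \<subseteq> X closure_of {y} \<union> a"
        using U closure_of_subset[of "{x}" X] openin_subset[OF W] x 1 by blast
      then show ?thesis
        using y U W by (meson interior_of_maximal openin_Int subsetD)
    next
      case 2
      then show ?thesis
        using a by (meson Un_upper2 interior_of_maximal subsetD)
    qed
  qed
  moreover have "W \<subseteq> (topspace X - coderiv X a) \<union> a"
    unfolding W_def opens_imp_def by (rule interior_of_subset)
  ultimately show False using x by blast
qed

lemma t0_space_closure_of_sing_antisym:
  assumes "t0_space X" "x \<in> X closure_of {y}" "y \<in> X closure_of {x}"
  shows "x = y"
proof -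
  have "X closure_of {x} = X closure_of {y}"
    using assms(2,3) by (meson closedin_closure_of closure_of_minimal empty_subsetI insert_subset
        subset_antisym)
  moreover have "x \<in> topspace X" "y \<in> topspace X"
    using assms(2,3) in_closure_of by fastforce+
  ultimately show ?thesis
    using assms(1) by (simp add: t0_space_closure_of_sing)
qed

lemma closure_of_disjoint_coderiv:
  assumes t0: "t0_space X"
    and no_isolated: "\<And>x U. x \<in> S \<Longrightarrow> openin X U \<Longrightarrow> U \<inter> S \<noteq> {x}"
  shows "X closure_of S \<inter> coderiv X (topspace X - X closure_of S) = {}"
proof (rule ccontr)
  define a where "a = topspace X - X closure_of S"
  have Sa: "S \<inter> a = {}"
    using closure_of_subset_Int[of X S] unfolding a_def by blast
  assume "X closure_of S \<inter> coderiv X (topspace X - X closure_of S) \<noteq> {}"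
  then obtain x where x: "x \<in> X closure_of S" "x \<in> coderiv X a"
    unfolding a_def by blast
  then obtain V where V: "openin X V" "x \<in> V"
    and nbhd: "\<forall>y\<in>V. y \<in> X interior_of (X closure_of {y} \<union> a)"
    unfolding in_coderiv by blast
  have near: "\<exists>W. openin X W \<and> y \<in> W \<and> W \<inter> S \<subseteq> X closure_of {y}" if "y \<in> V" for y
  proof -
    have "y \<in> X interior_of (X closure_of {y} \<union> a)"
      using nbhd that by blast
    then obtain W where "openin X W" "y \<in> W" "W \<subseteq> X closure_of {y} \<union> a"
      unfolding interior_of_def by blast
    with Sa show ?thesis by blast
  qed
  obtain y where y: "y \<in> S" "y \<in> V"
    using x(1) V unfolding in_closure_of by blast
  then obtain W where W: "openin X W" "y \<in> W" "W \<inter> S \<subseteq> X closure_of {y}"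
    using near by blast
  have "(W \<inter> V) \<inter> S \<noteq> {y}"
    using no_isolated y W V by blast
  then obtain z where z: "z \<in> W" "z \<in> V" "z \<in> S" "z \<noteq> y"
    using y W by blast
  then have zy: "z \<in> X closure_of {y}"
    using W by blast
  obtain W' where W': "openin X W'" "z \<in> W'" "W' \<inter> S \<subseteq> X closure_of {z}"
    using near z by blast
  have "y \<in> W'"
    using zy W' unfolding in_closure_of by blast
  then have "y \<in> X closure_of {z}"
    using W' y by blast
  then show False
    using t0_space_closure_of_sing_antisym[OF t0 zy] z by blast
qed

lemma t0_space_scattered_if_opens_imp_coderiv_subset:
  assumes t0: "t0_space X"
    and Loeb: "\<And>a. openin X a \<Longrightarrow> opens_imp X (coderiv X a) a \<subseteq> a"
  shows "scattered_space X"
  unfolding scattered_space_def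
proof (intro allI impI, rule ccontr)
  fix S assume S: "S \<subseteq> topspace X" "S \<noteq> {}"
    and "\<not> (\<exists>x\<in>S. \<exists>U. openin X U \<and> U \<inter> S = {x})"
  then have no_isolated: "\<And>x U. x \<in> S \<Longrightarrow> openin X U \<Longrightarrow> U \<inter> S \<noteq> {x}" by meson
  define a where "a = topspace X - X closure_of S"
  have "(topspace X - coderiv X a) \<union> a = topspace X"
    using closure_of_disjoint_coderiv[OF t0 no_isolated] closure_of_subset_topspace
    unfolding a_def by blast
  then have "topspace X \<subseteq> a"
    using Loeb[of a] by (simp add: a_def opens_imp_def openin_diff)
  then show False
    using S closure_of_subset[OF S(1)] unfolding a_def by blast
qed

theorem proposition4p8:
  fixes X :: "'a topology"
  shows "(scattered_space X \<longrightarrow> KM_operator X (coderiv X)) \<and>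
         (t0_space X \<and> KM_operator X (coderiv X) \<longrightarrow> scattered_space X)"
  by (simp add: KM_operator_coderiv_iff scattered_space_opens_imp_coderiv_subset
      t0_space_scattered_if_opens_imp_coderiv_subset)

end
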